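(* Let $\varphi(z,x,y)$ satisfy Conditions (C1)–(C5) described in the context, be twice continuously differentiable in $z$, and satisfy $\varphi''(z,x,y)\ge c_7z^{-2}\varphi(z,x,y)$ for $z>0$ and a.e. $(x,y)$, with a constant $c_7$ independent of $z,x,y$. Let $\psi(z,x,y)$ be non-negative, non-decreasing and twice continuously differentiable in $z$ for a.e. $(x,y)\in\Omega\times\Omega$, satisfy Conditions (C1), (C4), (C5), and the estimate $$\psi''(z,x,y)\ge -c_9z^{-1}\psi'(z,x,y)-c_{10}z^{-2}\psi(z,x,y)\quad\text{for a.e. }(x,y),$$ where $c_9<2$ and $c_{10}<c_7$ are constants independent of $z,x,y$. Suppose also that for some $q\ge0$ independent of $z,x,y$ the function $z\mapsto\psi(z,x,y)/z^q$ is non-increasing for a.e. $(x,y)$. Then the function $\psi(z,x,y)\varphi(z,x,y)$ satisfies Conditions (C1)–(C5).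
   Context: Let $\Omega\subseteq\mathbb R^d$ be a domain; functions in $L_{1,loc}(\Omega)$ are complex-valued; derivatives $'$ are with respect to $z$. A real function $r$ on $[0,\infty)$ is almost increasing (resp. almost decreasing) with constant $\beta\ge1$ if $r(s)\le\beta r(t)$ (resp. $\beta r(s)\ge r(t)$) for all $0\le s\le t$. For a function $\theta:[0,\infty)\times\Omega\times\Omega\to[0,\infty)$: (C1) for each $u\in L_{1,loc}(\Omega)$ the function $(x,y)\mapsto\theta(|u(x)-u(y)|,x,y)$ is measurable on $\Omega\times\Omega$; (C2) for every $\varepsilon>0$ there is $\delta\in(0,1)$ such that $\theta(\frac{s+t}{2},x,y)\le(1-\delta)\frac{\theta(s,x,y)+\theta(t,x,y)}{2}$ for a.e. $(x,y)$ and all $s,t>0$ with $|s-t|\ge\varepsilon\max\{s,t\}$; (C3) there are constants $1<p_-\le p_+$ and $\beta\ge1$ such that for a.e. $(x,y)$ the function $t\mapsto\theta(t,x,y)/t^{p_-}$ is almost increasing with constant $\beta$ and $t\mapsto\theta(t,x,y)/t^{p_+}$ is almost decreasing with constant $\beta$; (C4) for a.e. $(x,y)$: $c_1^{-1}\le\theta(1,x,y)\le c_1$ with some constant $c_1>0$, $\theta(0,x,y)=0$, and $\theta(t,x,y)>0$ for $t>0$; (C5) for a.e. $(x,y)$, $\theta(t,x,y)$ is differentiable in $t>0$ and $0<t\theta'(t,x,y)\le c_2\theta(t,x,y)$ for $t>0$, with some constant $c_2>1$. *)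

theory Defs
  imports "HOL-Analysis.Analysis"
begin

definition is_domain :: "'a::euclidean_space set \<Rightarrow> bool" where
  "is_domain \<Omega> \<longleftrightarrow> open \<Omega> \<and> connected \<Omega> \<and> \<Omega> \<noteq> {}"

definition L1_loc :: "'a::euclidean_space set \<Rightarrow> ('a \<Rightarrow> complex) set" where
  "L1_loc \<Omega> = {u. u \<in> borel_measurable (lebesgue_on \<Omega>) \<and>
      (\<forall>K. compact K \<and> K \<subseteq> \<Omega> \<longrightarrow> integrable (lebesgue_on K) u)}"

abbreviation AE2 :: "'a::euclidean_space set \<Rightarrow> ('a \<Rightarrow> 'a \<Rightarrow> bool) \<Rightarrow> bool" where
  "AE2 \<Omega> P \<equiv> (AE p in lebesgue_on (\<Omega> \<times> \<Omega>). P (fst p) (snd p))"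

definition almost_incr_on :: "real set \<Rightarrow> real \<Rightarrow> (real \<Rightarrow> real) \<Rightarrow> bool" where
  "almost_incr_on S \<beta> r \<longleftrightarrow> (\<forall>s\<in>S. \<forall>t\<in>S. s \<le> t \<longrightarrow> r s \<le> \<beta> * r t)"

definition almost_decr_on :: "real set \<Rightarrow> real \<Rightarrow> (real \<Rightarrow> real) \<Rightarrow> bool" where
  "almost_decr_on S \<beta> r \<longleftrightarrow> (\<forall>s\<in>S. \<forall>t\<in>S. s \<le> t \<longrightarrow> \<beta> * r s \<ge> r t)"

definition nonneg_fun :: "'a::euclidean_space set \<Rightarrow> (real \<Rightarrow> 'a \<Rightarrow> 'a \<Rightarrow> real) \<Rightarrow> bool" where
  "nonneg_fun \<Omega> \<theta> \<longleftrightarrow> (\<forall>t\<ge>0. \<forall>x\<in>\<Omega>. \<forall>y\<in>\<Omega>. \<theta> t x y \<ge> 0)"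

definition cond_C1 :: "'a::euclidean_space set \<Rightarrow> (real \<Rightarrow> 'a \<Rightarrow> 'a \<Rightarrow> real) \<Rightarrow> bool" where
  "cond_C1 \<Omega> \<theta> \<longleftrightarrow> (\<forall>u \<in> L1_loc \<Omega>.
     (\<lambda>p. \<theta> (cmod (u (fst p) - u (snd p))) (fst p) (snd p))
       \<in> borel_measurable (lebesgue_on (\<Omega> \<times> \<Omega>)))"

definition cond_C2 :: "'a::euclidean_space set \<Rightarrow> (real \<Rightarrow> 'a \<Rightarrow> 'a \<Rightarrow> real) \<Rightarrow> bool" where
  "cond_C2 \<Omega> \<theta> \<longleftrightarrow> (\<forall>\<epsilon>>0. \<exists>\<delta>. 0 < \<delta> \<and> \<delta> < 1 \<and>
     AE2 \<Omega> (\<lambda>x y. \<forall>s>0. \<forall>t>0. \<bar>s - t\<bar> \<ge> \<epsilon> * max s t \<longrightarrow>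
        \<theta> ((s + t) / 2) x y \<le> (1 - \<delta>) * ((\<theta> s x y + \<theta> t x y) / 2)))"

definition cond_C3 :: "'a::euclidean_space set \<Rightarrow> (real \<Rightarrow> 'a \<Rightarrow> 'a \<Rightarrow> real) \<Rightarrow> bool" where
  "cond_C3 \<Omega> \<theta> \<longleftrightarrow> (\<exists>pm pp \<beta>. 1 < pm \<and> pm \<le> pp \<and> \<beta> \<ge> 1 \<and>
     AE2 \<Omega> (\<lambda>x y. almost_incr_on {0<..} \<beta> (\<lambda>t. \<theta> t x y / t powr pm) \<and>
                  almost_decr_on {0<..} \<beta> (\<lambda>t. \<theta> t x y / t powr pp)))"

definition cond_C4 :: "'a::euclidean_space set \<Rightarrow> (real \<Rightarrow> 'a \<Rightarrow> 'a \<Rightarrow> real) \<Rightarrow> bool" where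
  "cond_C4 \<Omega> \<theta> \<longleftrightarrow> (\<exists>c1>0. AE2 \<Omega> (\<lambda>x y. 1 / c1 \<le> \<theta> 1 x y \<and> \<theta> 1 x y \<le> c1 \<and>
     \<theta> 0 x y = 0 \<and> (\<forall>t>0. \<theta> t x y > 0)))"

definition cond_C5 :: "'a::euclidean_space set \<Rightarrow> (real \<Rightarrow> 'a \<Rightarrow> 'a \<Rightarrow> real) \<Rightarrow> bool" where
  "cond_C5 \<Omega> \<theta> \<longleftrightarrow> (\<exists>c2>1. AE2 \<Omega> (\<lambda>x y. \<forall>t>0.
     (\<lambda>z. \<theta> z x y) differentiable (at t) \<and>
     0 < t * deriv (\<lambda>z. \<theta> z x y) t \<and> t * deriv (\<lambda>z. \<theta> z x y) t \<le> c2 * \<theta> t x y))"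

definition C2_on :: "real set \<Rightarrow> (real \<Rightarrow> real) \<Rightarrow> bool" where
  "C2_on S f \<longleftrightarrow> (\<forall>z\<in>S. f differentiable (at z)) \<and> (\<forall>z\<in>S. deriv f differentiable (at z))
     \<and> continuous_on S (deriv (deriv f))"

end

theory Submission
  imports Defs
begin

text \<open>Only (C2) needs an idea. Midpoint convexity of \<open>\<phi>\<close> together with \<open>\<phi>(0+) = 0\<close>
  (from (C3)) gives \<open>\<phi>'' \<ge> 0\<close> and \<open>\<phi> \<le> z \<phi>'\<close>. In
  \<open>(\<psi> \<phi>)'' = \<psi>'' \<phi> + 2 \<psi>' \<phi>' + \<psi> \<phi>''\<close> the cross term \<open>2 \<psi>' \<phi>' \<ge> 2 \<psi>' \<phi> / z\<close> then
  absorbs the negative part \<open>- c\<^sub>9 \<psi>' \<phi> / z\<close> of \<open>\<psi>'' \<phi>\<close>, leaving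
  \<open>(\<psi> \<phi>)'' \<ge> (c\<^sub>7 - c\<^sub>1\<^sub>0) \<psi> \<phi> / z\<^sup>2\<close>. A non-decreasing function with such a second
  derivative bound is uniformly midpoint convex with modulus quadratic in the relative
  gap \<open>|s - t| / max s t\<close>, which is (C2). The other conditions pass to products directly,
  with exponents \<open>p\<^sub>-\<close> and \<open>p\<^sub>+ + q\<close> in (C3) and \<open>c\<^sub>2\<close> constants adding up in (C5).\<close>

lemma taylor2_lower_bound:
  fixes f f' f'' :: "real \<Rightarrow> real"
  assumes f': "\<And>z. z \<in> {lo..hi} \<Longrightarrow> (f has_real_derivative f' z) (at z)"
    and f'': "\<And>z. z \<in> {lo..hi} \<Longrightarrow> (f' has_real_derivative f'' z) (at z)"
    and K: "\<And>z. z \<in> {lo..hi} \<Longrightarrow> K \<le> f'' z"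
    and a: "a \<in> {lo..hi}" and b: "b \<in> {lo..hi}"
  shows "f a + f' a * (b - a) + K * (b - a)^2 / 2 \<le> f b"
proof (cases "b = a")
  case True
  then show ?thesis by simp
next
  case False
  define diff where "diff = (\<lambda>m::nat. if m = 0 then f else if m = 1 then f' else f'')"
  have "\<exists>t. (if b < a then b < t \<and> t < a else a < t \<and> t < b) \<and>
      f b = (\<Sum>m<2. diff m a / fact m * (b - a)^m) + diff 2 t / fact 2 * (b - a)^2"
  proof (rule Taylor[where a = lo and b = hi])
    show "\<forall>m t. m < 2 \<and> lo \<le> t \<and> t \<le> hi \<longrightarrow> DERIV (diff m) t :> diff (Suc m) t"
      using f' f'' by (auto simp: diff_def less_2_cases_iff)
  qed (use a b False in \<open>auto simp: diff_def\<close>)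
  then obtain t where t_between: "if b < a then b < t \<and> t < a else a < t \<and> t < b"
    and taylor: "f b = (\<Sum>m<2. diff m a / fact m * (b - a)^m) + diff 2 t / fact 2 * (b - a)^2"
    by blast
  have t: "t \<in> {lo..hi}"
    using t_between a b by (auto split: if_splits)
  have f_b: "f b = f a + f' a * (b - a) + f'' t / 2 * (b - a)^2"
    using taylor by (simp add: diff_def numeral_2_eq_2)
  have "K * (b - a)^2 / 2 \<le> f'' t / 2 * (b - a)^2"
    using K[OF t] by (simp add: mult_right_mono)
  then show ?thesis
    using f_b by simp
qed

lemma taylor2_upper_bound:
  fixes f f' f'' :: "real \<Rightarrow> real"
  assumes "\<And>z. z \<in> {lo..hi} \<Longrightarrow> (f has_real_derivative f' z) (at z)"
    and "\<And>z. z \<in> {lo..hi} \<Longrightarrow> (f' has_real_derivative f'' z) (at z)"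
    and "\<And>z. z \<in> {lo..hi} \<Longrightarrow> f'' z \<le> K"
    and "a \<in> {lo..hi}" and "b \<in> {lo..hi}"
  shows "f b \<le> f a + f' a * (b - a) + K * (b - a)^2 / 2"
proof -
  have "- f a + - f' a * (b - a) + - K * (b - a)^2 / 2 \<le> - f b"
    by (rule taylor2_lower_bound[where f'' = "\<lambda>z. - f'' z"])
      (use assms in \<open>auto intro: DERIV_minus\<close>)
  then show ?thesis
    by simp
qed

lemma midpoint_convex_imp_second_deriv_nonneg:
  fixes f f' f'' :: "real \<Rightarrow> real"
  assumes f': "\<And>z. 0 < z \<Longrightarrow> (f has_real_derivative f' z) (at z)"
    and f'': "\<And>z. 0 < z \<Longrightarrow> (f' has_real_derivative f'' z) (at z)"
    and cont: "continuous_on {0<..} f''"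
    and midpoint_convex: "\<And>s t. 0 < s \<Longrightarrow> 0 < t \<Longrightarrow> f ((s + t) / 2) \<le> (f s + f t) / 2"
    and z: "0 < z"
  shows "0 \<le> f'' z"
proof (rule ccontr)
  assume "\<not> 0 \<le> f'' z"
  then have neg: "f'' z < 0" by simp
  have "(f'' \<longlongrightarrow> f'' z) (at z)"
    using cont z by (simp add: continuous_on_eq_continuous_at isContD)
  then have "\<forall>\<^sub>F w in at z. f'' w < f'' z / 2"
    using neg by (intro order_tendstoD(2)) auto
  then obtain d where d: "0 < d" and near: "\<And>w. w \<noteq> z \<Longrightarrow> dist w z < d \<Longrightarrow> f'' w < f'' z / 2"
    by (auto simp: eventually_at)
  define h where "h = min d z / 2"
  have h: "0 < h" "h < d" "h < z"
    using d z by (auto simp: h_def)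
  have bound: "f'' w \<le> f'' z / 2" if "w \<in> {z - h..z + h}" for w
  proof (cases "w = z")
    case False
    have "\<bar>w - z\<bar> < d"
      using that h by auto
    then show ?thesis
      using near[of w] False by (simp add: dist_real_def)
  qed (use neg in simp)
  have taylor: "f b \<le> f z + f' z * (b - z) + f'' z / 2 * (b - z)^2 / 2" if "b \<in> {z - h..z + h}" for b
    by (rule taylor2_upper_bound[where f'' = f'']) (use f' f'' bound h that in auto)
  have "f (z + h) \<le> f z + f' z * h + f'' z * h^2 / 4"
    using taylor[of "z + h"] h by simp
  moreover have "f (z - h) \<le> f z - f' z * h + f'' z * h^2 / 4"
    using taylor[of "z - h"] h by simp
  moreover have "f z \<le> (f (z - h) + f (z + h)) / 2"
    using midpoint_convex[of "z - h" "z + h"] h by simp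
  moreover have "f'' z * h^2 < 0"
    using neg h by (simp add: mult_neg_pos)
  ultimately show False
    by argo
qed

text \<open>The tangent at \<open>z\<close> lies below \<open>f\<close>, and \<open>f w \<le> C w\<close> forces its value at \<open>0\<close>
  to be \<open>\<le> 0\<close>.\<close>

lemma second_deriv_nonneg_imp_le_mult_deriv:
  fixes f f' f'' :: "real \<Rightarrow> real"
  assumes f': "\<And>z. 0 < z \<Longrightarrow> (f has_real_derivative f' z) (at z)"
    and f'': "\<And>z. 0 < z \<Longrightarrow> (f' has_real_derivative f'' z) (at z)"
    and convex: "\<And>z. 0 < z \<Longrightarrow> 0 \<le> f'' z"
    and linear: "\<And>w. 0 < w \<Longrightarrow> w \<le> 1 \<Longrightarrow> f w \<le> C * w"
    and z: "0 < z"
  shows "f z \<le> z * f' z"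
proof -
  have "f z - z * f' z \<le> (C - f' z) * w" if w: "0 < w" "w < min z 1" for w
  proof -
    have "f z + f' z * (w - z) + 0 * (w - z)^2 / 2 \<le> f w"
      by (rule taylor2_lower_bound[where lo = w and hi = z and f'' = f'']) (use f' f'' convex w in auto)
    then show ?thesis
      using linear[of w] w by (simp add: algebra_simps)
  qed
  then have "\<forall>\<^sub>F w in at_right 0. f z - z * f' z \<le> (C - f' z) * w"
    using z by (auto simp: eventually_at_right_field intro!: exI[of _ "min z 1"])
  moreover have "((\<lambda>w. (C - f' z) * w) \<longlongrightarrow> 0) (at_right 0)"
    by (auto intro!: tendsto_eq_intros)
  ultimately have "f z - z * f' z \<le> 0"
    by (intro tendsto_lowerbound) auto
  then show ?thesis
    by simp
qed

text \<open>The bound \<open>f'' \<ge> c f / z\<^sup>2\<close> makes \<open>f\<close> uniformly convex on \<open>[m, t]\<close>, with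
  \<open>m = (s + t) / 2\<close>: there \<open>f'' \<ge> c f(m) / t\<^sup>2\<close> since \<open>f\<close> increases. Adding the Taylor
  bounds at \<open>s\<close> and \<open>t\<close> around \<open>m\<close> cancels the first-order terms.\<close>

lemma midpoint_convexity_modulus_ordered:
  fixes f f' f'' :: "real \<Rightarrow> real"
  assumes f': "\<And>z. 0 < z \<Longrightarrow> (f has_real_derivative f' z) (at z)"
    and f'': "\<And>z. 0 < z \<Longrightarrow> (f' has_real_derivative f'' z) (at z)"
    and nonneg: "\<And>z. 0 < z \<Longrightarrow> 0 \<le> f z"
    and incr: "\<And>z. 0 < z \<Longrightarrow> 0 \<le> f' z"
    and bound: "\<And>z. 0 < z \<Longrightarrow> c * f z / z^2 \<le> f'' z"
    and c: "0 < c" and \<epsilon>: "0 \<le> \<epsilon>"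
    and st: "0 < s" "s < t" and gap: "\<epsilon> * t \<le> t - s"
  shows "f ((s + t) / 2) * (1 + c / 16 * \<epsilon>^2) \<le> (f s + f t) / 2"
proof -
  define m where "m = (s + t) / 2"
  define h where "h = (t - s) / 2"
  have m: "s < m" "m < t"
    using st by (auto simp: m_def)
  have tm: "t - m = h" "s - m = - h"
    by (simp_all add: m_def h_def field_simps)
  have convex: "0 \<le> f'' z" if "0 < z" for z
  proof -
    have "0 \<le> c * f z / z^2"
      using c nonneg[OF that] by simp
    then show ?thesis
      using bound[OF that] by linarith
  qed
  have mono: "f m \<le> f z" if "m \<le> z" for z
  proof (rule DERIV_nonneg_imp_nondecreasing[OF that])
    fix x assume "m \<le> x"
    then have "0 < x"
      using m st by linarith
    then show "\<exists>y. (f has_real_derivative y) (at x) \<and> 0 \<le> y"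
      using f' incr by blast
  qed
  have uniform: "c * f m / t^2 \<le> f'' z" if "z \<in> {m..t}" for z
  proof -
    have z: "0 < z" using that m st by auto
    have "c * f m / t^2 \<le> c * f z / t^2"
      using mono that c by (simp add: divide_right_mono)
    also have "\<dots> \<le> c * f z / z^2"
      using that z c nonneg[OF z] by (intro divide_left_mono mult_nonneg_nonneg power_mono) auto
    finally show ?thesis
      using bound[OF z] by linarith
  qed
  have "f m + f' m * (t - m) + c * f m / t^2 * (t - m)^2 / 2 \<le> f t"
    by (rule taylor2_lower_bound[where lo = m and hi = t and f'' = f'']) (use f' f'' uniform m st in auto)
  then have upper: "f m + f' m * h + c * f m * (h^2 / t^2) / 2 \<le> f t"
    by (simp add: tm)
  have "f m + f' m * (s - m) + 0 * (s - m)^2 / 2 \<le> f s"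
    by (rule taylor2_lower_bound[where lo = s and hi = m and f'' = f'']) (use f' f'' convex m st in auto)
  then have lower: "f m - f' m * h \<le> f s"
    by (simp add: tm)
  have "(\<epsilon> * t)^2 \<le> (2 * h)^2"
    using gap \<epsilon> st by (intro power_mono) (auto simp: h_def)
  then have "\<epsilon>^2 / 4 \<le> h^2 / t^2"
    using st by (simp add: field_simps)
  then have "c * f m * (\<epsilon>^2 / 4) \<le> c * f m * (h^2 / t^2)"
    using c nonneg[of m] m st by (intro mult_left_mono) auto
  moreover have "f m * (1 + c / 16 * \<epsilon>^2) = f m + c * f m * (\<epsilon>^2 / 4) / 4"
    by (simp add: algebra_simps)
  ultimately show ?thesis
    using upper lower unfolding m_def by argo
qed

lemma midpoint_convexity_modulus:
  fixes f f' f'' :: "real \<Rightarrow> real"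
  assumes "\<And>z. 0 < z \<Longrightarrow> (f has_real_derivative f' z) (at z)"
    and "\<And>z. 0 < z \<Longrightarrow> (f' has_real_derivative f'' z) (at z)"
    and "\<And>z. 0 < z \<Longrightarrow> 0 \<le> f z"
    and "\<And>z. 0 < z \<Longrightarrow> 0 \<le> f' z"
    and "\<And>z. 0 < z \<Longrightarrow> c * f z / z^2 \<le> f'' z"
    and c: "0 < c" and \<epsilon>: "0 < \<epsilon>"
    and st: "0 < s" "0 < t" and gap: "\<epsilon> * max s t \<le> \<bar>s - t\<bar>"
  shows "f ((s + t) / 2) \<le> (f s + f t) / 2 / (1 + c / 16 * \<epsilon>^2)"
proof -
  have "f ((s + t) / 2) * (1 + c / 16 * \<epsilon>^2) \<le> (f s + f t) / 2"
  proof (cases s t rule: linorder_cases)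
    case less
    then show ?thesis
      using midpoint_convexity_modulus_ordered[of f f' f'' c \<epsilon> s t] assms gap by auto
  next
    case equal
    then show ?thesis
      using gap mult_pos_pos[OF \<epsilon> st(2)] by simp
  next
    case greater
    then show ?thesis
      using midpoint_convexity_modulus_ordered[of f f' f'' c \<epsilon> t s] assms gap
      by (auto simp: add.commute)
  qed
  moreover have "0 < 1 + c / 16 * \<epsilon>^2"
    using c by (simp add: add_pos_nonneg)
  ultimately show ?thesis
    by (simp only: pos_le_divide_eq)
qed

lemma mult_second_deriv_lower_bound:
  fixes f f' f'' g g' g'' z :: real
  assumes f: "0 \<le> f" and g: "0 \<le> g" and f': "0 \<le> f'"
    and g': "g \<le> z * g'"
    and f'': "- c9 * z powr -1 * f' - c10 * z powr -2 * f \<le> f''"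
    and g'': "c7 * z powr -2 * g \<le> g''"
    and c9: "c9 < 2" and z: "0 < z"
  shows "(c7 - c10) * (f * g) / z^2 \<le> f'' * g + 2 * (f' * g') + f * g''"
proof -
  have powr: "z powr -1 = 1 / z" "z powr -2 = 1 / z^2"
    using z by (simp_all add: powr_minus_divide)
  have "(- c9 * f' / z - c10 * f / z^2) * g \<le> f'' * g"
    using f'' g z by (intro mult_right_mono) (simp_all add: powr)
  moreover have "f * (c7 * g / z^2) \<le> f * g''"
    using g'' f by (intro mult_left_mono) (simp_all add: powr)
  moreover have "f' * (g / z) \<le> f' * g'"
    using g' f' z by (intro mult_left_mono) (simp_all add: divide_le_eq mult.commute)
  moreover have "0 \<le> (2 - c9) * (f' * g / z)"
    using c9 f' g z by simp
  moreover have "(- c9 * f' / z - c10 * f / z^2) * g + 2 * (f' * (g / z)) + f * (c7 * g / z^2)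
      = (2 - c9) * (f' * g / z) + (c7 - c10) * (f * g) / z^2"
    using z by (simp add: field_simps)
  ultimately show ?thesis
    by linarith
qed

lemma C2_on_has_real_derivative:
  assumes "C2_on {0<..} f" and "0 < z"
  shows "(f has_real_derivative deriv f z) (at z)"
    and "(deriv f has_real_derivative deriv (deriv f) z) (at z)"
  using assms by (auto simp: C2_on_def DERIV_deriv_iff_real_differentiable)

lemma mult_midpoint_convexity_modulus:
  fixes f g :: "real \<Rightarrow> real"
  assumes f: "C2_on {0<..} f" and g: "C2_on {0<..} g"
    and f_nonneg: "\<And>z. 0 < z \<Longrightarrow> 0 \<le> f z"
    and f_incr: "\<And>z. 0 < z \<Longrightarrow> 0 \<le> deriv f z"
    and f'': "\<And>z. 0 < z \<Longrightarrow>
      - c9 * z powr -1 * deriv f z - c10 * z powr -2 * f z \<le> deriv (deriv f) z"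
    and g_nonneg: "\<And>z. 0 < z \<Longrightarrow> 0 \<le> g z"
    and g_midpoint_convex: "\<And>s t. 0 < s \<Longrightarrow> 0 < t \<Longrightarrow> g ((s + t) / 2) \<le> (g s + g t) / 2"
    and g_linear: "\<And>w. 0 < w \<Longrightarrow> w \<le> 1 \<Longrightarrow> g w \<le> C * w"
    and g'': "\<And>z. 0 < z \<Longrightarrow> c7 * z powr -2 * g z \<le> deriv (deriv g) z"
    and c9: "c9 < 2" and c10: "c10 < c7" and \<epsilon>: "0 < \<epsilon>"
    and st: "0 < s" "0 < t" and gap: "\<epsilon> * max s t \<le> \<bar>s - t\<bar>"
  shows "f ((s + t) / 2) * g ((s + t) / 2)
    \<le> (f s * g s + f t * g t) / 2 / (1 + (c7 - c10) / 16 * \<epsilon>^2)"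
proof -
  note df = C2_on_has_real_derivative[OF f] and dg = C2_on_has_real_derivative[OF g]
  have g_convex: "0 \<le> deriv (deriv g) z" if "0 < z" for z
    by (rule midpoint_convex_imp_second_deriv_nonneg[where f = g])
      (use dg g g_midpoint_convex that in \<open>auto simp: C2_on_def\<close>)
  have g_tangent: "g z \<le> z * deriv g z" if "0 < z" for z
    by (rule second_deriv_nonneg_imp_le_mult_deriv[where f'' = "deriv (deriv g)"])
      (use dg g_convex g_linear that in auto)
  have g_incr: "0 \<le> deriv g z" if "0 < z" for z
    using g_tangent[OF that] g_nonneg[OF that] that by (metis order.trans zero_le_mult_iff not_le)
  show ?thesis
  proof (rule midpoint_convexity_modulus)
    fix z :: real assume z: "0 < z"
    show "((\<lambda>z. f z * g z) has_real_derivative deriv f z * g z + f z * deriv g z) (at z)"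
      using df dg z by (auto intro!: derivative_eq_intros)
    show "((\<lambda>z. deriv f z * g z + f z * deriv g z) has_real_derivative
        deriv (deriv f) z * g z + 2 * (deriv f z * deriv g z) + f z * deriv (deriv g) z) (at z)"
      using df dg z by (auto intro!: derivative_eq_intros)
    show "0 \<le> f z * g z"
      using f_nonneg g_nonneg z by simp
    show "0 \<le> deriv f z * g z + f z * deriv g z"
      using f_nonneg g_nonneg f_incr g_incr z by simp
    show "(c7 - c10) * (f z * g z) / z^2
        \<le> deriv (deriv f) z * g z + 2 * (deriv f z * deriv g z) + f z * deriv (deriv g) z"
      by (rule mult_second_deriv_lower_bound) (use f_nonneg g_nonneg f_incr g_tangent f'' g'' c9 z in auto)
  qed (use c10 \<epsilon> st gap in auto)
qed

lemma almost_incr_on_powr_imp_le_linear: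
  fixes g :: "real \<Rightarrow> real"
  assumes incr: "almost_incr_on {0<..} \<beta> (\<lambda>t. g t / t powr p)"
    and p: "1 \<le> p" and nonneg: "0 \<le> \<beta> * g 1"
    and w: "0 < w" "w \<le> 1"
  shows "g w \<le> \<beta> * g 1 * w"
proof -
  have "g w / w powr p \<le> \<beta> * g 1"
    using incr w unfolding almost_incr_on_def by force
  then have "g w \<le> \<beta> * g 1 * w powr p"
    using w by (simp add: divide_le_eq mult.commute)
  also have "\<dots> \<le> \<beta> * g 1 * w"
    using w p nonneg powr_mono'[of 1 p w] by (intro mult_left_mono) auto
  finally show ?thesis .
qed

lemma almost_incr_on_mult_mono:
  fixes f g :: "real \<Rightarrow> real"
  assumes mono: "mono_on {0<..} f"
    and f: "\<And>t. 0 < t \<Longrightarrow> 0 \<le> f t" and g: "\<And>t. 0 < t \<Longrightarrow> 0 \<le> g t"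
    and incr: "almost_incr_on {0<..} \<beta> (\<lambda>t. g t / t powr p)"
  shows "almost_incr_on {0<..} \<beta> (\<lambda>t. f t * g t / t powr p)"
  unfolding almost_incr_on_def
proof (intro ballI impI)
  fix s t :: real assume s: "s \<in> {0<..}" and t: "t \<in> {0<..}" and st: "s \<le> t"
  have "f s * (g s / s powr p) \<le> f t * (\<beta> * (g t / t powr p))"
    using mono_onD[OF mono s t st] incr s t st f[of s] g[of s]
    by (intro mult_mono) (auto simp: almost_incr_on_def)
  then show "f s * g s / s powr p \<le> \<beta> * (f t * g t / t powr p)"
    by (simp add: algebra_simps)
qed

lemma almost_decr_on_mult_antimono:
  fixes f g :: "real \<Rightarrow> real"
  assumes antimono: "antimono_on {0<..} (\<lambda>t. f t / t powr q)"
    and f: "\<And>t. 0 < t \<Longrightarrow> 0 \<le> f t" and g: "\<And>t. 0 < t \<Longrightarrow> 0 \<le> g t" and \<beta>: "0 \<le> \<beta>"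
    and decr: "almost_decr_on {0<..} \<beta> (\<lambda>t. g t / t powr p)"
  shows "almost_decr_on {0<..} \<beta> (\<lambda>t. f t * g t / t powr (p + q))"
  unfolding almost_decr_on_def
proof (intro ballI impI)
  fix s t :: real assume s: "s \<in> {0<..}" and t: "t \<in> {0<..}" and st: "s \<le> t"
  have "(f t / t powr q) * (g t / t powr p) \<le> (f s / s powr q) * (\<beta> * (g s / s powr p))"
    using monotone_onD[OF antimono s t st] decr s t st f[of s] g[of t]
    by (intro mult_mono) (auto simp: almost_decr_on_def)
  then show "f t * g t / t powr (p + q) \<le> \<beta> * (f s * g s / s powr (p + q))"
    by (simp add: powr_add algebra_simps)
qed

lemma elasticity_bounds_mult:
  fixes f g :: "real \<Rightarrow> real"
  assumes f: "f differentiable (at t)" "0 < t * deriv f t" "t * deriv f t \<le> a * f t" "0 < f t"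
    and g: "g differentiable (at t)" "0 < t * deriv g t" "t * deriv g t \<le> b * g t" "0 < g t"
  shows "(\<lambda>z. f z * g z) differentiable (at t)
    \<and> 0 < t * deriv (\<lambda>z. f z * g z) t
    \<and> t * deriv (\<lambda>z. f z * g z) t \<le> (a + b) * (f t * g t)"
proof -
  have "((\<lambda>z. f z * g z) has_real_derivative deriv f t * g t + f t * deriv g t) (at t)"
    using f(1) g(1) by (auto simp: DERIV_deriv_iff_real_differentiable[symmetric] intro!: derivative_eq_intros)
  then have diff: "(\<lambda>z. f z * g z) differentiable (at t)"
    and elasticity: "t * deriv (\<lambda>z. f z * g z) t = t * deriv f t * g t + f t * (t * deriv g t)"
    by (auto simp: real_differentiable_def DERIV_imp_deriv algebra_simps)
  have "t * deriv f t * g t + f t * (t * deriv g t) \<le> a * f t * g t + f t * (b * g t)"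
    using f g by (intro add_mono mult_right_mono mult_left_mono) auto
  moreover have "0 < t * deriv f t * g t + f t * (t * deriv g t)"
    using mult_pos_pos[OF f(2) g(4)] mult_pos_pos[OF f(4) g(2)] by linarith
  ultimately show ?thesis
    using diff elasticity by (simp add: algebra_simps)
qed

lemma AE2_in_domain: "AE2 \<Omega> (\<lambda>x y. x \<in> \<Omega> \<and> y \<in> \<Omega>)"
  using AE_space[of "lebesgue_on (\<Omega> \<times> \<Omega>)"] by (rule eventually_mono) (auto simp: mem_Times_iff)

text \<open>The set of full measure in \<open>cond_C2\<close> depends on \<open>\<epsilon>\<close>; intersecting over
  \<open>\<epsilon> = 1 / (n + 1)\<close> gives plain midpoint convexity for almost every \<open>(x, y)\<close>.\<close>

lemma cond_C2_imp_AE_midpoint_convex: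
  assumes C2: "cond_C2 \<Omega> \<theta>" and nonneg: "nonneg_fun \<Omega> \<theta>"
  shows "AE2 \<Omega> (\<lambda>x y. \<forall>s>0. \<forall>t>0. \<theta> ((s + t) / 2) x y \<le> (\<theta> s x y + \<theta> t x y) / 2)"
proof -
  have "AE2 \<Omega> (\<lambda>x y. \<forall>s>0. \<forall>t>0. max s t / Suc n \<le> \<bar>s - t\<bar> \<longrightarrow>
      \<theta> ((s + t) / 2) x y \<le> (\<theta> s x y + \<theta> t x y) / 2)" for n
  proof -
    have "0 < 1 / real (Suc n)"
      by simp
    then obtain \<delta> where \<delta>: "0 < \<delta>" "\<delta> < 1" and gap: "AE2 \<Omega> (\<lambda>x y. \<forall>s>0. \<forall>t>0.
        \<bar>s - t\<bar> \<ge> 1 / real (Suc n) * max s t \<longrightarrow>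
        \<theta> ((s + t) / 2) x y \<le> (1 - \<delta>) * ((\<theta> s x y + \<theta> t x y) / 2))"
      using C2 unfolding cond_C2_def by blast
    from gap AE2_in_domain show ?thesis
    proof eventually_elim
      case (elim xy)
      show ?case
      proof (intro allI impI)
        fix s t :: real assume st: "0 < s" "0 < t" and gap_n: "max s t / Suc n \<le> \<bar>s - t\<bar>"
        have "\<theta> ((s + t) / 2) (fst xy) (snd xy)
            \<le> (1 - \<delta>) * ((\<theta> s (fst xy) (snd xy) + \<theta> t (fst xy) (snd xy)) / 2)"
          using elim(1) st gap_n by simp
        also have "\<dots> \<le> (\<theta> s (fst xy) (snd xy) + \<theta> t (fst xy) (snd xy)) / 2"
          using nonneg elim(2) st \<delta> unfolding nonneg_fun_def by (intro mult_left_le_one_le) auto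
        finally show "\<theta> ((s + t) / 2) (fst xy) (snd xy)
            \<le> (\<theta> s (fst xy) (snd xy) + \<theta> t (fst xy) (snd xy)) / 2" .
      qed
    qed
  qed
  then have "AE2 \<Omega> (\<lambda>x y. \<forall>n. \<forall>s>0. \<forall>t>0. max s t / Suc n \<le> \<bar>s - t\<bar> \<longrightarrow>
      \<theta> ((s + t) / 2) x y \<le> (\<theta> s x y + \<theta> t x y) / 2)"
    by (subst AE_all_countable) blast
  then show ?thesis
  proof eventually_elim
    case (elim xy)
    show ?case
    proof (intro allI impI)
      fix s t :: real assume st: "0 < s" "0 < t"
      show "\<theta> ((s + t) / 2) (fst xy) (snd xy) \<le> (\<theta> s (fst xy) (snd xy) + \<theta> t (fst xy) (snd xy)) / 2"
      proof (cases "s = t")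
        case False
        then have "0 < \<bar>s - t\<bar> / max s t"
          using st by (simp add: less_max_iff_disj)
        then obtain n where "inverse (Suc n) < \<bar>s - t\<bar> / max s t"
          using reals_Archimedean by blast
        then have "max s t / Suc n \<le> \<bar>s - t\<bar>"
          using st by (simp add: less_divide_eq inverse_eq_divide less_max_iff_disj mult.commute)
        then show ?thesis
          using elim st by blast
      qed simp
    qed
  qed
qed

lemma nonneg_fun_mult:
  assumes "nonneg_fun \<Omega> \<phi>" and "nonneg_fun \<Omega> \<psi>"
  shows "nonneg_fun \<Omega> (\<lambda>z x y. \<psi> z x y * \<phi> z x y)"
  using assms unfolding nonneg_fun_def by simp

lemma cond_C1_mult:
  assumes "cond_C1 \<Omega> \<phi>" and "cond_C1 \<Omega> \<psi>"
  shows "cond_C1 \<Omega> (\<lambda>z x y. \<psi> z x y * \<phi> z x y)"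
  using assms unfolding cond_C1_def by (auto intro!: borel_measurable_times)

lemma cond_C2I_quadratic_modulus:
  assumes \<kappa>: "0 < \<kappa>"
    and modulus: "AE2 \<Omega> (\<lambda>x y. \<forall>\<epsilon>>0. \<forall>s>0. \<forall>t>0. \<epsilon> * max s t \<le> \<bar>s - t\<bar> \<longrightarrow>
      \<theta> ((s + t) / 2) x y \<le> (\<theta> s x y + \<theta> t x y) / 2 / (1 + \<kappa> * \<epsilon>^2))"
  shows "cond_C2 \<Omega> \<theta>"
  unfolding cond_C2_def
proof (intro allI impI)
  fix \<epsilon> :: real assume \<epsilon>: "0 < \<epsilon>"
  define \<delta> where "\<delta> = 1 - 1 / (1 + \<kappa> * \<epsilon>^2)"
  have "0 < \<kappa> * \<epsilon>^2"
    using \<kappa> \<epsilon> by simp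
  then have \<delta>: "0 < \<delta>" "\<delta> < 1"
    unfolding \<delta>_def by (simp_all add: field_simps)
  have one_minus_\<delta>: "(1 - \<delta>) * (a / 2) = a / 2 / (1 + \<kappa> * \<epsilon>^2)" for a
    by (simp add: \<delta>_def)
  have "AE2 \<Omega> (\<lambda>x y. \<forall>s>0. \<forall>t>0. \<bar>s - t\<bar> \<ge> \<epsilon> * max s t \<longrightarrow>
      \<theta> ((s + t) / 2) x y \<le> (1 - \<delta>) * ((\<theta> s x y + \<theta> t x y) / 2))"
    using modulus by (rule eventually_mono) (unfold one_minus_\<delta>, use \<epsilon> in blast)
  with \<delta> show "\<exists>\<delta>>0. \<delta> < 1 \<and> AE2 \<Omega> (\<lambda>x y. \<forall>s>0. \<forall>t>0. \<bar>s - t\<bar> \<ge> \<epsilon> * max s t \<longrightarrow>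
      \<theta> ((s + t) / 2) x y \<le> (1 - \<delta>) * ((\<theta> s x y + \<theta> t x y) / 2))"
    by blast
qed

lemma cond_C2_mult:
  assumes phi_nn: "nonneg_fun \<Omega> \<phi>" and phi_C2: "cond_C2 \<Omega> \<phi>" and phi_C3: "cond_C3 \<Omega> \<phi>"
    and phi_smooth: "\<forall>x\<in>\<Omega>. \<forall>y\<in>\<Omega>. C2_on {0<..} (\<lambda>z. \<phi> z x y)"
    and phi_dd: "AE2 \<Omega> (\<lambda>x y. \<forall>z>0.
        deriv (deriv (\<lambda>z. \<phi> z x y)) z \<ge> c7 * z powr (-2) * \<phi> z x y)"
    and psi_nn: "nonneg_fun \<Omega> \<psi>"
    and psi_mono: "AE2 \<Omega> (\<lambda>x y. mono_on {0..} (\<lambda>z. \<psi> z x y))"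
    and psi_smooth: "AE2 \<Omega> (\<lambda>x y. C2_on {0<..} (\<lambda>z. \<psi> z x y))"
    and psi_dd: "AE2 \<Omega> (\<lambda>x y. \<forall>z>0.
        deriv (deriv (\<lambda>z. \<psi> z x y)) z \<ge>
          - c9 * z powr (-1) * deriv (\<lambda>z. \<psi> z x y) z - c10 * z powr (-2) * \<psi> z x y)"
    and c9: "c9 < 2" and c10: "c10 < c7"
  shows "cond_C2 \<Omega> (\<lambda>z x y. \<psi> z x y * \<phi> z x y)"
proof (rule cond_C2I_quadratic_modulus[where \<kappa> = "(c7 - c10) / 16"])
  obtain p p' \<beta> where p: "1 < p" "1 \<le> \<beta>" and phi_incr: "AE2 \<Omega> (\<lambda>x y.
      almost_incr_on {0<..} \<beta> (\<lambda>t. \<phi> t x y / t powr p) \<and>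
      almost_decr_on {0<..} \<beta> (\<lambda>t. \<phi> t x y / t powr p'))"
    using phi_C3 unfolding cond_C3_def by blast
  have modulus: "\<psi> ((s + t) / 2) x y * \<phi> ((s + t) / 2) x y
      \<le> (\<psi> s x y * \<phi> s x y + \<psi> t x y * \<phi> t x y) / 2 / (1 + (c7 - c10) / 16 * \<epsilon>^2)"
    if "x \<in> \<Omega>" "y \<in> \<Omega>"
      and "almost_incr_on {0<..} \<beta> (\<lambda>t. \<phi> t x y / t powr p)"
      and "\<forall>s>0. \<forall>t>0. \<phi> ((s + t) / 2) x y \<le> (\<phi> s x y + \<phi> t x y) / 2"
      and "\<forall>z>0. deriv (deriv (\<lambda>z. \<phi> z x y)) z \<ge> c7 * z powr (-2) * \<phi> z x y"
      and psi_mono_xy: "mono_on {0..} (\<lambda>z. \<psi> z x y)" and psi: "C2_on {0<..} (\<lambda>z. \<psi> z x y)"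
      and "\<forall>z>0. deriv (deriv (\<lambda>z. \<psi> z x y)) z \<ge>
          - c9 * z powr (-1) * deriv (\<lambda>z. \<psi> z x y) z - c10 * z powr (-2) * \<psi> z x y"
      and "0 < \<epsilon>" "0 < s" "0 < t" "\<epsilon> * max s t \<le> \<bar>s - t\<bar>"
    for x y \<epsilon> s t
  proof -
    have "deriv (\<lambda>z. \<psi> z x y) z \<ge> 0" if "0 < z" for z
      by (rule mono_on_imp_deriv_nonneg[of "{0..}"])
        (use that psi_mono_xy psi C2_on_has_real_derivative in auto)
    then show ?thesis
      using that phi_nn psi_nn phi_smooth p c9 c10
      by (intro mult_midpoint_convexity_modulus[where C = "\<beta> * \<phi> 1 x y"]
          almost_incr_on_powr_imp_le_linear[where p = p])
        (auto simp: nonneg_fun_def)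
  qed
  show "AE2 \<Omega> (\<lambda>x y. \<forall>\<epsilon>>0. \<forall>s>0. \<forall>t>0. \<epsilon> * max s t \<le> \<bar>s - t\<bar> \<longrightarrow>
      \<psi> ((s + t) / 2) x y * \<phi> ((s + t) / 2) x y
        \<le> (\<psi> s x y * \<phi> s x y + \<psi> t x y * \<phi> t x y) / 2 / (1 + (c7 - c10) / 16 * \<epsilon>^2))"
    using AE2_in_domain phi_incr cond_C2_imp_AE_midpoint_convex[OF phi_C2 phi_nn] phi_dd
      psi_mono psi_smooth psi_dd
    by eventually_elim (blast intro: modulus)
qed (use c10 in simp)

lemma cond_C3_mult:
  assumes phi_nn: "nonneg_fun \<Omega> \<phi>" and psi_nn: "nonneg_fun \<Omega> \<psi>"
    and phi_C3: "cond_C3 \<Omega> \<phi>"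
    and psi_mono: "AE2 \<Omega> (\<lambda>x y. mono_on {0..} (\<lambda>z. \<psi> z x y))"
    and psi_q: "\<exists>q\<ge>0. AE2 \<Omega> (\<lambda>x y. antimono_on {0<..} (\<lambda>z. \<psi> z x y / z powr q))"
  shows "cond_C3 \<Omega> (\<lambda>z x y. \<psi> z x y * \<phi> z x y)"
proof -
  obtain p p' \<beta> where p: "1 < p" "p \<le> p'" "1 \<le> \<beta>" and phi_AE: "AE2 \<Omega> (\<lambda>x y.
      almost_incr_on {0<..} \<beta> (\<lambda>t. \<phi> t x y / t powr p) \<and>
      almost_decr_on {0<..} \<beta> (\<lambda>t. \<phi> t x y / t powr p'))"
    using phi_C3 unfolding cond_C3_def by blast
  obtain q where q: "0 \<le> q" and psi_AE: "AE2 \<Omega> (\<lambda>x y. antimono_on {0<..} (\<lambda>z. \<psi> z x y / z powr q))"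
    using psi_q by blast
  have "AE2 \<Omega> (\<lambda>x y.
      almost_incr_on {0<..} \<beta> (\<lambda>t. \<psi> t x y * \<phi> t x y / t powr p) \<and>
      almost_decr_on {0<..} \<beta> (\<lambda>t. \<psi> t x y * \<phi> t x y / t powr (p' + q)))"
    using AE2_in_domain phi_AE psi_mono psi_AE
  proof eventually_elim
    case (elim xy)
    then have "0 \<le> \<psi> t (fst xy) (snd xy)" "0 \<le> \<phi> t (fst xy) (snd xy)" if "0 < t" for t
      using phi_nn psi_nn that unfolding nonneg_fun_def by auto
    then show ?case
      using elim p by (auto intro!: almost_incr_on_mult_mono almost_decr_on_mult_antimono
          elim: mono_on_subset)
  qed
  then show ?thesis
    unfolding cond_C3_def using p q by (intro exI[of _ p] exI[of _ "p' + q"] exI[of _ \<beta>]) auto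
qed

lemma cond_C4_mult:
  assumes "cond_C4 \<Omega> \<phi>" and "cond_C4 \<Omega> \<psi>"
  shows "cond_C4 \<Omega> (\<lambda>z x y. \<psi> z x y * \<phi> z x y)"
proof -
  obtain a where a: "0 < a" and phi: "AE2 \<Omega> (\<lambda>x y. 1 / a \<le> \<phi> 1 x y \<and> \<phi> 1 x y \<le> a \<and>
      \<phi> 0 x y = 0 \<and> (\<forall>t>0. \<phi> t x y > 0))"
    using assms(1) unfolding cond_C4_def by blast
  obtain b where b: "0 < b" and psi: "AE2 \<Omega> (\<lambda>x y. 1 / b \<le> \<psi> 1 x y \<and> \<psi> 1 x y \<le> b \<and>
      \<psi> 0 x y = 0 \<and> (\<forall>t>0. \<psi> t x y > 0))"
    using assms(2) unfolding cond_C4_def by blast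
  have "AE2 \<Omega> (\<lambda>x y. 1 / (b * a) \<le> \<psi> 1 x y * \<phi> 1 x y \<and> \<psi> 1 x y * \<phi> 1 x y \<le> b * a \<and>
      \<psi> 0 x y * \<phi> 0 x y = 0 \<and> (\<forall>t>0. \<psi> t x y * \<phi> t x y > 0))"
    using phi psi
  proof eventually_elim
    case (elim xy)
    define A B where "A = \<psi> 1 (fst xy) (snd xy)" and "B = \<phi> 1 (fst xy) (snd xy)"
    have A: "1 / b \<le> A" "A \<le> b" "0 < A" and B: "1 / a \<le> B" "B \<le> a" "0 < B"
      using elim by (simp_all add: A_def B_def)
    have "1 / (b * a) \<le> A * B"
      using mult_mono[OF A(1) B(1)] A(3) a by simp
    moreover have "A * B \<le> b * a"
      using mult_mono[OF A(2) B(2)] A(2,3) B(3) by simp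
    ultimately show ?case
      using elim unfolding A_def B_def by simp
  qed
  then show ?thesis
    unfolding cond_C4_def using a b by (intro exI[of _ "b * a"]) auto
qed

lemma cond_C5_mult:
  assumes "cond_C5 \<Omega> \<phi>" and "cond_C5 \<Omega> \<psi>" and "cond_C4 \<Omega> \<phi>" and "cond_C4 \<Omega> \<psi>"
  shows "cond_C5 \<Omega> (\<lambda>z x y. \<psi> z x y * \<phi> z x y)"
proof -
  obtain a where a: "1 < a" and phi: "AE2 \<Omega> (\<lambda>x y. \<forall>t>0.
      (\<lambda>z. \<phi> z x y) differentiable (at t) \<and>
      0 < t * deriv (\<lambda>z. \<phi> z x y) t \<and> t * deriv (\<lambda>z. \<phi> z x y) t \<le> a * \<phi> t x y)"
    using assms(1) unfolding cond_C5_def by blast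
  obtain b where b: "1 < b" and psi: "AE2 \<Omega> (\<lambda>x y. \<forall>t>0.
      (\<lambda>z. \<psi> z x y) differentiable (at t) \<and>
      0 < t * deriv (\<lambda>z. \<psi> z x y) t \<and> t * deriv (\<lambda>z. \<psi> z x y) t \<le> b * \<psi> t x y)"
    using assms(2) unfolding cond_C5_def by blast
  obtain c where "AE2 \<Omega> (\<lambda>x y. 1 / c \<le> \<phi> 1 x y \<and> \<phi> 1 x y \<le> c \<and>
      \<phi> 0 x y = 0 \<and> (\<forall>t>0. \<phi> t x y > 0))"
    using assms(3) unfolding cond_C4_def by blast
  then have phi_pos: "AE2 \<Omega> (\<lambda>x y. \<forall>t>0. \<phi> t x y > 0)"
    by (rule eventually_mono) simp
  obtain c' where "AE2 \<Omega> (\<lambda>x y. 1 / c' \<le> \<psi> 1 x y \<and> \<psi> 1 x y \<le> c' \<and>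
      \<psi> 0 x y = 0 \<and> (\<forall>t>0. \<psi> t x y > 0))"
    using assms(4) unfolding cond_C4_def by blast
  then have psi_pos: "AE2 \<Omega> (\<lambda>x y. \<forall>t>0. \<psi> t x y > 0)"
    by (rule eventually_mono) simp
  have "AE2 \<Omega> (\<lambda>x y. \<forall>t>0. (\<lambda>z. \<psi> z x y * \<phi> z x y) differentiable (at t) \<and>
      0 < t * deriv (\<lambda>z. \<psi> z x y * \<phi> z x y) t \<and>
      t * deriv (\<lambda>z. \<psi> z x y * \<phi> z x y) t \<le> (b + a) * (\<psi> t x y * \<phi> t x y))"
    using phi psi phi_pos psi_pos
  proof eventually_elim
    case (elim xy)
    show ?case
      by (intro allI impI elasticity_bounds_mult) (use elim in auto)
  qed
  then show ?thesis
    unfolding cond_C5_def using a b by (intro exI[of _ "b + a"]) auto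
qed

theorem theorem2p11:
  fixes \<Omega> :: "'a::euclidean_space set"
    and \<phi> \<psi> :: "real \<Rightarrow> 'a \<Rightarrow> 'a \<Rightarrow> real"
    and c7 c9 c10 :: real
  assumes dom: "is_domain \<Omega>"
    and phi_nn: "nonneg_fun \<Omega> \<phi>"
    and phi_C: "cond_C1 \<Omega> \<phi>" "cond_C2 \<Omega> \<phi>" "cond_C3 \<Omega> \<phi>" "cond_C4 \<Omega> \<phi>" "cond_C5 \<Omega> \<phi>"
    and phi_C2: "\<forall>x\<in>\<Omega>. \<forall>y\<in>\<Omega>. C2_on {0<..} (\<lambda>z. \<phi> z x y)"
    and phi_dd: "AE2 \<Omega> (\<lambda>x y. \<forall>z>0.
        deriv (deriv (\<lambda>z. \<phi> z x y)) z \<ge> c7 * z powr (-2) * \<phi> z x y)"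
    and psi_nn: "nonneg_fun \<Omega> \<psi>"
    and psi_mono: "AE2 \<Omega> (\<lambda>x y. mono_on {0..} (\<lambda>z. \<psi> z x y))"
    and psi_C2: "AE2 \<Omega> (\<lambda>x y. C2_on {0<..} (\<lambda>z. \<psi> z x y))"
    and psi_C: "cond_C1 \<Omega> \<psi>" "cond_C4 \<Omega> \<psi>" "cond_C5 \<Omega> \<psi>"
    and psi_dd: "AE2 \<Omega> (\<lambda>x y. \<forall>z>0.
        deriv (deriv (\<lambda>z. \<psi> z x y)) z \<ge>
          - c9 * z powr (-1) * deriv (\<lambda>z. \<psi> z x y) z - c10 * z powr (-2) * \<psi> z x y)"
    and c9: "c9 < 2" and c10: "c10 < c7"
    and psi_q: "\<exists>q\<ge>0. AE2 \<Omega> (\<lambda>x y. antimono_on {0<..} (\<lambda>z. \<psi> z x y / z powr q))"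
  shows "nonneg_fun \<Omega> (\<lambda>z x y. \<psi> z x y * \<phi> z x y)
    \<and> cond_C1 \<Omega> (\<lambda>z x y. \<psi> z x y * \<phi> z x y)
    \<and> cond_C2 \<Omega> (\<lambda>z x y. \<psi> z x y * \<phi> z x y)
    \<and> cond_C3 \<Omega> (\<lambda>z x y. \<psi> z x y * \<phi> z x y)
    \<and> cond_C4 \<Omega> (\<lambda>z x y. \<psi> z x y * \<phi> z x y)
    \<and> cond_C5 \<Omega> (\<lambda>z x y. \<psi> z x y * \<phi> z x y)"
  using nonneg_fun_mult[OF phi_nn psi_nn]
    cond_C1_mult[OF phi_C(1) psi_C(1)]
    cond_C2_mult[OF phi_nn phi_C(2,3) phi_C2 phi_dd psi_nn psi_mono psi_C2 psi_dd c9 c10]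
    cond_C3_mult[OF phi_nn psi_nn phi_C(3) psi_mono psi_q]
    cond_C4_mult[OF phi_C(4) psi_C(2)]
    cond_C5_mult[OF phi_C(5) psi_C(3) phi_C(4) psi_C(2)]
  by blast

end
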